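(* Let $\alpha\in\Lambda$ be an infinite multiindex. For any $\beta,\gamma\in\Lambda$ the limit \[ q(\gamma,\beta)=\lim_{m\to\infty} q\big((\gamma_1,\dots,\gamma_m),(\beta_1,\dots,\beta_m)\big) \] exists. Moreover, on the complex vector space $\tilde H_\alpha$ having as a basis the formal symbols $e_\beta$, $\beta\sim\alpha$, the sesquilinear form determined by \[ (e_\beta,e_\gamma)=q(\gamma,\beta),\qquad \beta,\gamma\sim\alpha, \] is Hermitian and positive, i.e. $\sum_{k,l} c_k\overline{c_l}\,(e_{\beta^{(k)}},e_{\beta^{(l)}})\ge 0$ for all finite families of scalars $c_k$ and multiindices $\beta^{(k)}\sim\alpha$. In addition, $(e_\beta,e_\gamma)=0$ unless there exists $m$ with $\sigma^m(\beta)=\sigma^m(\gamma)$, in which case $(e_\beta,e_\gamma)=(e_{(\beta_1,\dots,\beta_m)},e_{(\gamma_1,\dots,\gamma_m)})_{\mathcal F}$.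
   Context: Fix $d\ge 2$ and complex numbers $q_{ij}$, $1\le i\ne j\le d$, with $|q_{ij}|<1$ and $q_{ij}=\overline{q_{ji}}$. Let $W$ be the universal $C^*$-algebra generated by $s_1,\dots,s_d$ subject to $s_i^*s_i=I$ and $s_i^*s_j=q_{ij}s_js_i^*$ for $i\ne j$. Let $\Lambda_m=\{1,\dots,d\}^m$ (with $\Lambda_0$ consisting of the empty multiindex $\emptyset$), $\Lambda^0=\bigcup_{m\ge0}\Lambda_m$, and $\Lambda=\{1,\dots,d\}^{\mathbb N}$ the set of infinite multiindices. For finite $\alpha=(\alpha_1,\dots,\alpha_m)$ put $s_\alpha=s_{\alpha_1}\cdots s_{\alpha_m}$, $s_\emptyset=I$. The shift is $\sigma(\alpha_1,\alpha_2,\dots)=(\alpha_2,\alpha_3,\dots)$. Two infinite multiindices are equivalent, $\beta\sim\alpha$, if there are $m,n\ge0$ with $\sigma^m(\beta)=\sigma^n(\alpha)$. Fock representation: $\pi_F$ is the $*$-representation of $W$ on a Hilbert space $\mathcal F$ with a unit vector $\Omega$ such that $\pi_F(s_j)^*\Omega=0$ for all $j$ and the vectors $e_\alpha=\pi_F(s_\alpha)\Omega$, $\alpha\in\Lambda^0$, span a dense subspace; $\mathcal F_n=\mathrm{span}\{e_\alpha:\alpha\in\Lambda_n\}$, and these subspaces are mutually orthogonal. For finite $\alpha,\beta\in\Lambda_m$ define $q(\alpha,\beta)=\langle \pi_F(s_\alpha)^*\pi_F(s_\beta)\Omega,\Omega\rangle=(e_\beta,e_\alpha)_{\mathcal F}$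 (this is nonzero only if $\beta$ is a permutation of $\alpha$). *)

theory Defs
  imports "HOL-Analysis.Analysis" "HOL-Library.Complex_Order"
begin

text \<open>Letters are 1..d; finite multiindices are lists, infinite ones are
functions nat => nat (0-based: beta_1 is beta 0).  The parameter q i j
is q_{ij}.\<close>

text \<open>Action of the adjoint generator s_i^* on the Fock vector e_beta,
computed from s_i^* s_i = I, s_i^* s_j = q_ij s_j s_i^* (i ~= j) and
s_i^* Omega = 0:  None means the zero vector, Some (c, r) means c * e_r.\<close>
fun sadj :: "(nat \<Rightarrow> nat \<Rightarrow> complex) \<Rightarrow> nat \<Rightarrow> nat list \<Rightarrow> (complex \<times> nat list) option" where
  "sadj q i [] = None"
| "sadj q i (b # bs) =
     (if b = i then Some (1, bs)
      else map_option (\<lambda>(c, r). (q i b * c, b # r)) (sadj q i bs))"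

text \<open>Finite q(alpha, beta) = < pi_F(s_alpha)^* pi_F(s_beta) Omega, Omega >
 = (e_beta, e_alpha)_F, where s_alpha^* = s_{alpha_m}^* ... s_{alpha_1}^*.\<close>
fun qfin :: "(nat \<Rightarrow> nat \<Rightarrow> complex) \<Rightarrow> nat list \<Rightarrow> nat list \<Rightarrow> complex" where
  "qfin q [] [] = 1"
| "qfin q [] (b # bs) = 0"
| "qfin q (a # as) bs =
     (case sadj q a bs of None \<Rightarrow> 0 | Some (c, r) \<Rightarrow> c * qfin q as r)"

definition infidx :: "nat \<Rightarrow> (nat \<Rightarrow> nat) set" where
  "infidx d = {\<alpha>. \<forall>n. \<alpha> n \<in> {1..d}}"

definition prefix :: "(nat \<Rightarrow> nat) \<Rightarrow> nat \<Rightarrow> nat list" where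
  "prefix \<alpha> m = map \<alpha> [0..<m]"

definition shift :: "nat \<Rightarrow> (nat \<Rightarrow> nat) \<Rightarrow> (nat \<Rightarrow> nat)" where
  "shift m \<alpha> = (\<lambda>n. \<alpha> (n + m))"

definition midx_equiv :: "(nat \<Rightarrow> nat) \<Rightarrow> (nat \<Rightarrow> nat) \<Rightarrow> bool" where
  "midx_equiv \<beta> \<alpha> \<longleftrightarrow> (\<exists>m n. shift m \<beta> = shift n \<alpha>)"

definition qinf :: "(nat \<Rightarrow> nat \<Rightarrow> complex) \<Rightarrow> (nat \<Rightarrow> nat) \<Rightarrow> (nat \<Rightarrow> nat) \<Rightarrow> complex" where
  "qinf q \<gamma> \<beta> = lim (\<lambda>m. qfin q (prefix \<gamma> m) (prefix \<beta> m))"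

definition eform :: "(nat \<Rightarrow> nat \<Rightarrow> complex) \<Rightarrow> (nat \<Rightarrow> nat) \<Rightarrow> (nat \<Rightarrow> nat) \<Rightarrow> complex" where
  "eform q \<beta> \<gamma> = qinf q \<gamma> \<beta>"

end

theory Submission
  imports Defs
begin

text \<open>
  Commuting each s_i^* to the right through s_beta shows that for finite words
  q(alpha, beta) vanishes unless beta is a permutation of alpha, and is otherwise the product
  of q_ij over the inversions: pairs of occurrences of distinct letters i, j with i before j
  in alpha and after it in beta.

  Positivity: this kernel factorizes over pairs of occurrences, each pair contributing
  the Gram matrix of the unit vectors (1, 0) and (q_ij, sqrt (1 - |q_ij|^2)) of C^2,
  so the kernel is itself a Gram matrix; positivity passes to the limit.

  Convergence: with |q_ij| <= r < 1, a prefix value of modulus at least e forces the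
  two prefixes to be permutations of each other with fewer than K inversions, where
  r^K < e. Inversion sets only grow along such prefix pairs, and once their number has
  stopped growing every longer prefix pair is again a permutation pair, so the two infinite
  words agree from some point on and the prefix values become constant. Otherwise the
  prefix values tend to 0.
\<close>

text \<open>The pair (a, k) stands for the k-th occurrence (counting from 0, left to right)
  of the letter a; occ_pos locates it in the word.\<close>

definition occs :: "nat list \<Rightarrow> (nat \<times> nat) set" where
  "occs w = {(a, k). k < count (mset w) a}"

fun occ_pos :: "nat list \<Rightarrow> nat \<times> nat \<Rightarrow> nat" where
  "occ_pos [] x = 0"
| "occ_pos (c # w) (a, k) =
     (if c = a then (if k = 0 then 0 else Suc (occ_pos w (a, k - 1))) else Suc (occ_pos w (a, k)))"

lemma occs_Nil [simp]: "occs [] = {}"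
  by (simp add: occs_def)

lemma occs_Cons: "occs (c # w) = insert (c, count (mset w) c) (occs w)"
  by (auto simp: occs_def split: if_splits)

lemma count_occ_notin_occs: "(c, count (mset w) c) \<notin> occs w"
  by (simp add: occs_def)

lemma finite_occs [simp]: "finite (occs w)"
  by (induction w) (auto simp: occs_Cons)

lemma card_occs: "card (occs w) = length w"
  by (induction w) (simp_all add: occs_Cons count_occ_notin_occs)

lemma prod_occs_fst: "(\<Prod>y\<in>occs w. f (fst y)) = prod_list (map f w)" for f :: "nat \<Rightarrow> complex"
  by (induction w) (simp_all add: occs_Cons count_occ_notin_occs)

lemma occs_eq_iff_mset: "occs u = occs v \<longleftrightarrow> mset u = mset v"
proof
  assume "occs u = occs v"
  then have "{..<count (mset u) a} = {..<count (mset v) a}" for a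
    by (auto simp: occs_def set_eq_iff)
  then show "mset u = mset v"
    by (simp add: multiset_eq_iff)
qed (simp add: occs_def)

lemma occs_append: "occs u \<subseteq> occs (u @ v)"
  by (auto simp: occs_def)

lemma occ_pos_less: "x \<in> occs w \<Longrightarrow> occ_pos w x < length w"
  by (induction w x rule: occ_pos.induct) (auto simp: occs_def split: if_splits)

lemma occ_pos_nth:
  "x \<in> occs w \<Longrightarrow> w ! occ_pos w x = fst x \<and> count (mset (take (occ_pos w x) w)) (fst x) = snd x"
  by (induction w x rule: occ_pos.induct) (auto simp: occs_def split: if_splits)

lemma fst_occs: "y \<in> occs w \<Longrightarrow> fst y \<in> set w"
  by (metis nth_mem occ_pos_less occ_pos_nth)

lemma fst_occs_eq_set: "fst ` occs w = set w"
proof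
  show "set w \<subseteq> fst ` occs w"
  proof
    fix a assume "a \<in> set w"
    then have "(a, 0) \<in> occs w" by (simp add: occs_def)
    then show "a \<in> fst ` occs w" by force
  qed
qed (use fst_occs in blast)

lemma occ_pos_inj: "x \<in> occs w \<Longrightarrow> y \<in> occs w \<Longrightarrow> occ_pos w x = occ_pos w y \<Longrightarrow> x = y"
  by (metis occ_pos_nth prod.collapse)

lemma occ_pos_append: "x \<in> occs u \<Longrightarrow> occ_pos (u @ v) x = occ_pos u x"
  by (induction u x rule: occ_pos.induct) (auto simp: occs_def split: if_splits)

lemma occ_pos_append_ge: "x \<notin> occs u \<Longrightarrow> length u \<le> occ_pos (u @ v) x"
  by (induction u x rule: occ_pos.induct) (auto simp: occs_def split: if_splits)

lemma occ_pos_first: "a \<notin> set pre \<Longrightarrow> occ_pos (pre @ a # post) (a, 0) = length pre"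
  by (induction pre) auto

definition bump_occ :: "nat \<Rightarrow> nat \<times> nat \<Rightarrow> nat \<times> nat" where
  "bump_occ a y = (if fst y = a then (a, Suc (snd y)) else y)"

lemma bump_occ_inj: "inj (bump_occ a)"
  by (auto simp: inj_def bump_occ_def split: if_splits)

lemma bump_occ_ne: "bump_occ a y \<noteq> (a, 0)"
  by (auto simp: bump_occ_def)

lemma fst_bump_occ [simp]: "fst (bump_occ a y) = fst y"
  by (simp add: bump_occ_def)

lemma bump_occ_id: "fst y \<noteq> a \<Longrightarrow> bump_occ a y = y"
  by (simp add: bump_occ_def)

lemma occs_add_mset:
  assumes "mset w = add_mset a (mset v)"
  shows "occs w = insert (a, 0) (bump_occ a ` occs v)"
proof -
  have "x \<in> bump_occ a ` occs v" if "x \<in> occs w" "x \<noteq> (a, 0)" for x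
  proof (cases "fst x = a")
    case True
    then show ?thesis using that assms
      by (intro image_eqI[of _ _ "(a, snd x - 1)"]) (auto simp: occs_def bump_occ_def)
  next
    case False
    then show ?thesis using that assms
      by (intro image_eqI[of _ _ x]) (auto simp: occs_def bump_occ_def)
  qed
  moreover have "insert (a, 0) (bump_occ a ` occs v) \<subseteq> occs w"
    using assms by (auto simp: occs_def bump_occ_def)
  ultimately show ?thesis by blast
qed

lemma occ_pos_bump:
  assumes "a \<notin> set pre" "y \<in> occs (pre @ post)"
  shows "occ_pos (pre @ a # post) (bump_occ a y) =
    (if occ_pos (pre @ post) y < length pre then occ_pos (pre @ post) y else Suc (occ_pos (pre @ post) y))"
  using assms
proof (induction pre arbitrary: y)
  case Nil
  then show ?case by (cases y) (simp add: bump_occ_def)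
next
  case (Cons c pre)
  obtain b k where y: "y = (b, k)" by fastforce
  have "c \<noteq> a" "a \<notin> set pre" using Cons.prems by auto
  then show ?case
    using Cons.prems(2) Cons.IH[of "(b, k)"] Cons.IH[of "(b, k - 1)"]
    by (auto simp: y occs_def bump_occ_def)
qed

definition inversions :: "nat list \<Rightarrow> nat list \<Rightarrow> ((nat \<times> nat) \<times> (nat \<times> nat)) set" where
  "inversions u v = {(x, y). x \<in> occs u \<and> y \<in> occs u \<and> fst x \<noteq> fst y \<and>
                             occ_pos u x < occ_pos u y \<and> occ_pos v y < occ_pos v x}"

abbreviation pair_weight :: "(nat \<Rightarrow> nat \<Rightarrow> complex) \<Rightarrow> (nat \<times> nat) \<times> (nat \<times> nat) \<Rightarrow> complex" where
  "pair_weight q p \<equiv> q (fst (fst p)) (fst (snd p))"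

lemma finite_inversions [simp]: "finite (inversions u v)"
  by (rule finite_subset[of _ "occs u \<times> occs u"]) (auto simp: inversions_def)

lemma sadj_notin: "i \<notin> set bs \<Longrightarrow> sadj q i bs = None"
  by (induction bs) auto

lemma sadj_first_occurrence:
  "i \<notin> set pre \<Longrightarrow> sadj q i (pre @ i # post) = Some (prod_list (map (q i) pre), pre @ post)"
  by (induction pre) auto

lemma occ_pos_Cons_bump: "y \<in> occs w \<Longrightarrow> occ_pos (a # w) (bump_occ a y) = Suc (occ_pos w y)"
  using occ_pos_bump[of a "[]" y w] by simp

lemma inversions_Cons_subset:
  assumes a: "a \<notin> set pre" and m: "mset as = mset (pre @ post)"
  shows "inversions (a # as) (pre @ a # post) \<subseteq>
     (\<lambda>y. ((a, 0), y)) ` occs pre \<union> map_prod (bump_occ a) (bump_occ a) ` inversions as (pre @ post)"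
proof
  fix p assume p: "p \<in> inversions (a # as) (pre @ a # post)"
  obtain x y where p_xy: "p = (x, y)" by (cases p)
  have occs_as: "occs (pre @ post) = occs as" using m by (simp add: occs_eq_iff_mset)
  have x: "x \<in> insert (a, 0) (bump_occ a ` occs as)" and y: "y \<in> insert (a, 0) (bump_occ a ` occs as)"
    and fst_ne: "fst x \<noteq> fst y" and lt_left: "occ_pos (a # as) x < occ_pos (a # as) y"
    and lt_right: "occ_pos (pre @ a # post) y < occ_pos (pre @ a # post) x"
    using p by (auto simp: p_xy inversions_def occs_add_mset)
  from y lt_left obtain y' where y': "y' \<in> occs as" "y = bump_occ a y'"
    by auto
  show "p \<in> (\<lambda>y. ((a, 0), y)) ` occs pre \<union> map_prod (bump_occ a) (bump_occ a) ` inversions as (pre @ post)"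
  proof (cases "x = (a, 0)")
    case True
    then have "bump_occ a y' = y'" using fst_ne y' by (simp add: bump_occ_id)
    moreover have "occ_pos (pre @ post) y' < length pre"
      using lt_right True occ_pos_first[OF a] occ_pos_bump[OF a, of y' post] y' occs_as
      by (simp split: if_splits)
    then have "y' \<in> occs pre"
      using occ_pos_append_ge[of y' pre post] by (metis not_less)
    ultimately show ?thesis using p_xy True y' by blast
  next
    case False
    then obtain x' where x': "x' \<in> occs as" "x = bump_occ a x'" using x by auto
    have "(x', y') \<in> inversions as (pre @ post)"
      using x' y' fst_ne lt_left lt_right occ_pos_Cons_bump occ_pos_bump[OF a] occs_as
      by (auto simp: inversions_def split: if_splits)
    then show ?thesis using p_xy x' y' by force
  qed
qed

lemma inversions_Cons_supset:
  assumes a: "a \<notin> set pre" and m: "mset as = mset (pre @ post)"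
  shows "(\<lambda>y. ((a, 0), y)) ` occs pre \<union> map_prod (bump_occ a) (bump_occ a) ` inversions as (pre @ post)
     \<subseteq> inversions (a # as) (pre @ a # post)"
proof
  fix p
  have occs_as: "occs (pre @ post) = occs as" using m by (simp add: occs_eq_iff_mset)
  assume "p \<in> (\<lambda>y. ((a, 0), y)) ` occs pre \<union> map_prod (bump_occ a) (bump_occ a) ` inversions as (pre @ post)"
  then consider (first) y where "y \<in> occs pre" "p = ((a, 0), y)"
    | (bumped) x y where "(x, y) \<in> inversions as (pre @ post)" "p = (bump_occ a x, bump_occ a y)"
    by auto
  then show "p \<in> inversions (a # as) (pre @ a # post)"
  proof cases
    case first
    have fst_y: "fst y \<noteq> a" using fst_occs[OF first(1)] a by auto
    then have y_fix: "bump_occ a y = y" by (rule bump_occ_id)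
    have y_as: "y \<in> occs as" using first(1) occs_append[of pre post] occs_as by auto
    have "occ_pos (pre @ a # post) y = occ_pos pre y"
      using occ_pos_append[OF first(1), of "a # post"] by simp
    then have "occ_pos (pre @ a # post) y < occ_pos (pre @ a # post) (a, 0)"
      using occ_pos_less[OF first(1)] occ_pos_first[OF a] by simp
    moreover have "occ_pos (a # as) (a, 0) < occ_pos (a # as) y"
      using occ_pos_Cons_bump[OF y_as, of a] y_fix by simp
    moreover have "y \<in> occs (a # as)" "(a, 0) \<in> occs (a # as)"
      using y_as y_fix by (auto simp: occs_add_mset) (metis image_eqI)
    ultimately show ?thesis using first(2) fst_y by (auto simp: inversions_def)
  next
    case bumped
    from bumped(1) have xy: "x \<in> occs as" "y \<in> occs as" "fst x \<noteq> fst y"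
      "occ_pos as x < occ_pos as y" "occ_pos (pre @ post) y < occ_pos (pre @ post) x"
      by (auto simp: inversions_def)
    moreover have "bump_occ a x \<in> occs (a # as)" "bump_occ a y \<in> occs (a # as)"
      using xy(1,2) by (simp_all add: occs_add_mset)
    ultimately show ?thesis
      using occ_pos_Cons_bump[OF xy(1)] occ_pos_Cons_bump[OF xy(2)] bumped(2) occs_as
        occ_pos_bump[OF a, of x post] occ_pos_bump[OF a, of y post]
      by (auto simp: inversions_def split: if_splits)
  qed
qed

lemma inversions_Cons:
  "a \<notin> set pre \<Longrightarrow> mset as = mset (pre @ post) \<Longrightarrow> inversions (a # as) (pre @ a # post) =
     (\<lambda>y. ((a, 0), y)) ` occs pre \<union> map_prod (bump_occ a) (bump_occ a) ` inversions as (pre @ post)"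
  by (intro equalityI inversions_Cons_subset inversions_Cons_supset)

lemma qfin_eq_prod_inversions:
  "qfin q u v = (if mset u = mset v then (\<Prod>p\<in>inversions u v. pair_weight q p) else 0)"
proof (induction u arbitrary: v)
  case Nil
  then show ?case by (cases v) (auto simp: inversions_def)
next
  case (Cons a as)
  show ?case
  proof (cases "a \<in> set v")
    case False
    then have "mset (a # as) \<noteq> mset v"
      by (metis list.set_intros(1) set_mset_mset)
    then show ?thesis using False by (simp add: sadj_notin)
  next
    case True
    then obtain pre post where v: "v = pre @ a # post" and a: "a \<notin> set pre"
      using split_list_first by metis
    show ?thesis
    proof (cases "mset as = mset (pre @ post)")
      case False
      then show ?thesis using Cons.IH v by (simp add: sadj_first_occurrence[OF a])
    next
      case m: True
      have disj: "(\<lambda>y. ((a, 0), y)) ` occs pre \<inter> map_prod (bump_occ a) (bump_occ a) ` inversions as (pre @ post) = {}"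
        using bump_occ_ne[of a] by fastforce
      have inj: "inj (map_prod (bump_occ a) (bump_occ a))"
        by (intro prod.inj_map bump_occ_inj)
      have "(\<Prod>p\<in>inversions (a # as) v. pair_weight q p) =
            (\<Prod>y\<in>occs pre. q a (fst y)) * (\<Prod>p\<in>inversions as (pre @ post). pair_weight q p)"
        unfolding v inversions_Cons[OF a m] using disj
        by (simp add: prod.union_disjoint prod.reindex inj_on_def prod.reindex[OF inj_on_subset[OF inj]] case_prod_beta)
      then show ?thesis using Cons.IH v m by (simp add: sadj_first_occurrence[OF a] prod_occs_fst)
    qed
  qed
qed

lemma inversions_swap: "mset u = mset v \<Longrightarrow> inversions v u = prod.swap ` inversions u v"
  by (force simp: inversions_def simp flip: occs_eq_iff_mset)

lemma qfin_cnj_commute: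
  assumes "\<And>i j. i \<in> set u \<Longrightarrow> j \<in> set u \<Longrightarrow> i \<noteq> j \<Longrightarrow> q i j = cnj (q j i)"
  shows "qfin q u v = cnj (qfin q v u)"
proof (cases "mset u = mset v")
  case True
  have "cnj (qfin q v u) = (\<Prod>p\<in>inversions u v. cnj (pair_weight q (prod.swap p)))"
    using True by (simp add: qfin_eq_prod_inversions inversions_swap[OF True] prod.reindex)
  also have "\<dots> = (\<Prod>p\<in>inversions u v. pair_weight q p)"
  proof (rule prod.cong[OF refl])
    fix p assume "p \<in> inversions u v"
    then have "fst (fst p) \<in> set u" "fst (snd p) \<in> set u" "fst (fst p) \<noteq> fst (snd p)"
      using fst_occs by (auto simp: inversions_def)
    then show "cnj (pair_weight q (prod.swap p)) = pair_weight q p"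
      using assms[of "fst (snd p)" "fst (fst p)"] by simp
  qed
  finally show ?thesis using True by (simp add: qfin_eq_prod_inversions)
qed (auto simp: qfin_eq_prod_inversions)

lemma qfin_self: "qfin q w w = 1"
  by (induction w) simp_all

lemma qfin_append_perm:
  "mset u = mset v \<Longrightarrow> qfin q (u @ w) (v @ w) = qfin q u v"
proof (induction u arbitrary: v)
  case (Cons a u)
  then obtain pre post where v: "v = pre @ a # post" and a: "a \<notin> set pre"
    by (metis list.set_intros(1) set_mset_mset split_list_first)
  then show ?case
    using Cons.prems Cons.IH[of "pre @ post"] sadj_first_occurrence[OF a, of q "post @ w"]
      sadj_first_occurrence[OF a, of q post]
    by simp
qed (simp add: qfin_self)

lemma qfin_append: "qfin q (u @ w) (v @ w) = qfin q u v"
  by (cases "mset u = mset v") (simp add: qfin_append_perm, simp add: qfin_eq_prod_inversions)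

lemma norm_qfin_le:
  assumes "\<And>i j. i \<in> set u \<Longrightarrow> j \<in> set u \<Longrightarrow> i \<noteq> j \<Longrightarrow> cmod (q i j) \<le> r" "0 \<le> r"
  shows "cmod (qfin q u v) \<le> r ^ card (inversions u v)"
proof (cases "mset u = mset v")
  case True
  have "cmod (qfin q u v) = (\<Prod>p\<in>inversions u v. cmod (pair_weight q p))"
    using True by (simp add: qfin_eq_prod_inversions prod_norm)
  also have "\<dots> \<le> (\<Prod>p\<in>inversions u v. r)"
    using assms fst_occs by (intro prod_mono) (auto simp: inversions_def)
  finally show ?thesis by simp
qed (use assms in \<open>simp add: qfin_eq_prod_inversions\<close>)

definition reversed_in :: "nat list \<Rightarrow> (nat \<times> nat) \<times> (nat \<times> nat) \<Rightarrow> bool" where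
  "reversed_in w p \<longleftrightarrow> fst p \<in> occs w \<and> snd p \<in> occs w \<and> occ_pos w (snd p) < occ_pos w (fst p)"

text \<open>pair_vector z False and pair_vector z True are the unit vectors (1, 0) and
  (z, sqrt (1 - |z|^2)) of C^2, indexed by bool.\<close>

definition pair_vector :: "complex \<Rightarrow> bool \<Rightarrow> bool \<Rightarrow> complex" where
  "pair_vector z s b =
     (if s then (if b then complex_of_real (sqrt (1 - (cmod z)\<^sup>2)) else z) else (if b then 0 else 1))"

lemma inner_pair_vector:
  assumes "cmod z \<le> 1"
  shows "(\<Sum>b\<in>UNIV. pair_vector z s b * cnj (pair_vector z s' b)) =
           (if s = s' then 1 else if s then z else cnj z)"
proof -
  have "0 \<le> 1 - (cmod z)\<^sup>2" using assms by (simp add: abs_square_le_1)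
  then have "z * cnj z + complex_of_real (sqrt (1 - (cmod z)\<^sup>2)) *
               cnj (complex_of_real (sqrt (1 - (cmod z)\<^sup>2))) = 1"
    by (simp add: complex_norm_square[symmetric] flip: of_real_mult of_real_add)
  then show ?thesis by (cases s; cases s') (simp_all add: pair_vector_def UNIV_bool)
qed

definition pair_kernel :: "(nat \<Rightarrow> nat \<Rightarrow> complex) \<Rightarrow> nat list \<Rightarrow> nat list \<Rightarrow> (nat \<times> nat) \<times> (nat \<times> nat) \<Rightarrow> complex" where
  "pair_kernel q u v p = (if reversed_in u p = reversed_in v p then 1
     else if reversed_in u p then pair_weight q p else cnj (pair_weight q p))"

lemma sum_PiE_pair_vectors:
  assumes "finite Pairs" "\<And>p. p \<in> Pairs \<Longrightarrow> cmod (pair_weight q p) \<le> 1"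
  shows "(\<Sum>t\<in>Pairs \<rightarrow>\<^sub>E UNIV. \<Prod>p\<in>Pairs. pair_vector (pair_weight q p) (reversed_in u p) (t p) *
            cnj (pair_vector (pair_weight q p) (reversed_in v p) (t p))) = (\<Prod>p\<in>Pairs. pair_kernel q u v p)"
proof -
  have "(\<Sum>t\<in>Pairs \<rightarrow>\<^sub>E UNIV. \<Prod>p\<in>Pairs. pair_vector (pair_weight q p) (reversed_in u p) (t p) *
            cnj (pair_vector (pair_weight q p) (reversed_in v p) (t p))) =
        (\<Prod>p\<in>Pairs. \<Sum>b\<in>UNIV. pair_vector (pair_weight q p) (reversed_in u p) b *
            cnj (pair_vector (pair_weight q p) (reversed_in v p) b))"
    by (rule prod_sum_PiE[symmetric]) (simp_all add: assms(1))
  also have "\<dots> = (\<Prod>p\<in>Pairs. pair_kernel q u v p)"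
    using assms(2) by (intro prod.cong[OF refl]) (simp add: inner_pair_vector pair_kernel_def)
  finally show ?thesis .
qed

lemma pair_kernel_eq_inversion_weights:
  assumes m: "mset u = mset v" and xy: "fst x < fst y"
    and herm: "\<And>i j. i \<in> set u \<Longrightarrow> j \<in> set u \<Longrightarrow> i \<noteq> j \<Longrightarrow> q i j = cnj (q j i)"
  shows "pair_kernel q v u (x, y) =
    (if (x, y) \<in> inversions u v then pair_weight q (x, y) else 1) *
    (if (y, x) \<in> inversions u v then pair_weight q (y, x) else 1)"
proof -
  have occs_v: "occs v = occs u" using m by (simp add: occs_eq_iff_mset)
  show ?thesis
  proof (cases "x \<in> occs u \<and> y \<in> occs u")
    case True
    have "occ_pos u x \<noteq> occ_pos u y" "occ_pos v x \<noteq> occ_pos v y"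
      using occ_pos_inj True xy occs_v by (metis less_irrefl)+
    moreover have "q (fst y) (fst x) = cnj (q (fst x) (fst y))"
      using herm fst_occs True xy by (metis less_irrefl)
    ultimately show ?thesis
      using True xy occs_v by (auto simp: pair_kernel_def reversed_in_def inversions_def linorder_neq_iff)
  qed (auto simp: pair_kernel_def reversed_in_def inversions_def occs_v)
qed

lemma prod_pair_kernel_eq_prod_inversions:
  assumes m: "mset u = mset v" and occs_u: "occs u \<subseteq> Occ" and fin: "finite Occ"
    and herm: "\<And>i j. i \<in> set u \<Longrightarrow> j \<in> set u \<Longrightarrow> i \<noteq> j \<Longrightarrow> q i j = cnj (q j i)"
    and Pairs: "Pairs = {p \<in> Occ \<times> Occ. fst (fst p) < fst (snd p)}"
  shows "(\<Prod>p\<in>Pairs. pair_kernel q v u p) = (\<Prod>p\<in>inversions u v. pair_weight q p)"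
proof -
  define h where "h p = (if p \<in> inversions u v then pair_weight q p else 1)" for p
  have fin_Pairs: "finite Pairs" unfolding Pairs using fin by (auto intro: finite_subset[of _ "Occ \<times> Occ"])
  have "inversions u v \<subseteq> Pairs \<union> prod.swap ` Pairs"
  proof
    fix p assume p: "p \<in> inversions u v"
    then have "fst (fst p) < fst (snd p) \<or> fst (snd p) < fst (fst p)" "fst p \<in> Occ" "snd p \<in> Occ"
      using occs_u by (auto simp: inversions_def)
    then show "p \<in> Pairs \<union> prod.swap ` Pairs"
      unfolding Pairs by (cases p) (auto simp: image_iff)
  qed
  then have "(\<Prod>p\<in>inversions u v. pair_weight q p) = (\<Prod>p\<in>Pairs \<union> prod.swap ` Pairs. h p)"
    by (intro prod.mono_neutral_cong_left) (use fin_Pairs in \<open>auto simp: h_def\<close>)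
  also have "\<dots> = (\<Prod>p\<in>Pairs. h p) * (\<Prod>p\<in>Pairs. h (prod.swap p))"
    using fin_Pairs by (subst prod.union_disjoint) (auto simp: Pairs prod.reindex inj_on_def)
  also have "\<dots> = (\<Prod>p\<in>Pairs. h p * h (prod.swap p))"
    by (rule prod.distrib[symmetric])
  also have "\<dots> = (\<Prod>p\<in>Pairs. pair_kernel q v u p)"
    using pair_kernel_eq_inversion_weights[OF m _ herm] by (intro prod.cong) (auto simp: Pairs h_def)
  finally show ?thesis by simp
qed

text \<open>The tensor product of the pair vectors, preceded by a coordinate that separates
  words with different multisets of letters.\<close>

definition gram_vector ::
  "(nat \<Rightarrow> nat \<Rightarrow> complex) \<Rightarrow> ((nat \<times> nat) \<times> (nat \<times> nat)) set \<Rightarrow> nat list \<Rightarrow>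
     nat multiset \<times> ((nat \<times> nat) \<times> (nat \<times> nat) \<Rightarrow> bool) \<Rightarrow> complex" where
  "gram_vector q Pairs w z = (if mset w = fst z then 1 else 0) *
     (\<Prod>p\<in>Pairs. pair_vector (pair_weight q p) (reversed_in w p) (snd z p))"

lemma qfin_eq_sum_gram_vector:
  assumes Ms: "finite Ms" "mset u \<in> Ms" and Occ: "finite Occ" "occs u \<subseteq> Occ" "occs v \<subseteq> Occ"
    and Pairs: "Pairs = {p \<in> Occ \<times> Occ. fst (fst p) < fst (snd p)}"
    and letters: "fst ` Occ \<subseteq> L"
    and herm: "\<And>i j. i \<in> L \<Longrightarrow> j \<in> L \<Longrightarrow> i \<noteq> j \<Longrightarrow> q i j = cnj (q j i)"
    and norm: "\<And>i j. i \<in> L \<Longrightarrow> j \<in> L \<Longrightarrow> i \<noteq> j \<Longrightarrow> cmod (q i j) \<le> 1"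
  shows "qfin q v u = (\<Sum>z\<in>Ms \<times> (Pairs \<rightarrow>\<^sub>E UNIV). gram_vector q Pairs u z * cnj (gram_vector q Pairs v z))"
proof -
  have "finite Pairs" unfolding Pairs using Occ(1) by (auto intro: finite_subset[of _ "Occ \<times> Occ"])
  moreover have "cmod (pair_weight q p) \<le> 1" if "p \<in> Pairs" for p
    using that letters by (intro norm) (auto simp: Pairs)
  ultimately have "(\<Sum>t\<in>Pairs \<rightarrow>\<^sub>E UNIV. gram_vector q Pairs u (M, t) * cnj (gram_vector q Pairs v (M, t))) =
      (if M = mset u then if mset v = mset u then (\<Prod>p\<in>Pairs. pair_kernel q u v p) else 0 else 0)" for M
    by (auto simp: gram_vector_def sum_PiE_pair_vectors simp flip: prod.distrib)
  then have "(\<Sum>z\<in>Ms \<times> (Pairs \<rightarrow>\<^sub>E UNIV). gram_vector q Pairs u z * cnj (gram_vector q Pairs v z)) =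
      (if mset v = mset u then (\<Prod>p\<in>Pairs. pair_kernel q u v p) else 0)"
    using Ms by (simp add: sum.cartesian_product' sum.delta)
  also have "\<dots> = qfin q v u"
  proof (cases "mset v = mset u")
    case True
    have "set v \<subseteq> L"
      using image_mono[OF Occ(3), of fst] letters by (simp add: fst_occs_eq_set)
    then have "(\<Prod>p\<in>Pairs. pair_kernel q u v p) = (\<Prod>p\<in>inversions v u. pair_weight q p)"
      using herm by (intro prod_pair_kernel_eq_prod_inversions[OF True Occ(3) Occ(1) _ Pairs]) blast
    then show ?thesis using True by (simp add: qfin_eq_prod_inversions)
  qed (simp add: qfin_eq_prod_inversions)
  finally show ?thesis by simp
qed

lemma qfin_gram_nonneg:
  fixes ws :: "nat \<Rightarrow> nat list" and c :: "nat \<Rightarrow> complex"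
  assumes herm: "\<And>i j. i \<in> L \<Longrightarrow> j \<in> L \<Longrightarrow> i \<noteq> j \<Longrightarrow> q i j = cnj (q j i)"
    and norm: "\<And>i j. i \<in> L \<Longrightarrow> j \<in> L \<Longrightarrow> i \<noteq> j \<Longrightarrow> cmod (q i j) \<le> 1"
    and letters: "\<And>k. k < n \<Longrightarrow> set (ws k) \<subseteq> L"
  shows "0 \<le> (\<Sum>k<n. \<Sum>l<n. c k * cnj (c l) * qfin q (ws l) (ws k))"
proof -
  define Occ where "Occ = (\<Union>k<n. occs (ws k))"
  define Pairs where "Pairs = {p \<in> Occ \<times> Occ. fst (fst p) < fst (snd p)}"
  define Z where "Z = (\<lambda>k. mset (ws k)) ` {..<n} \<times> (Pairs \<rightarrow>\<^sub>E (UNIV :: bool set))"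
  define vec where "vec = gram_vector q Pairs"
  have Occ_L: "fst ` Occ \<subseteq> L"
    unfolding Occ_def image_UN fst_occs_eq_set using letters by blast
  have gram: "qfin q (ws l) (ws k) = (\<Sum>z\<in>Z. vec (ws k) z * cnj (vec (ws l) z))"
    if "k < n" "l < n" for k l
    unfolding Z_def vec_def
  proof (rule qfin_eq_sum_gram_vector[OF _ _ _ _ _ Pairs_def])
    show "finite ((\<lambda>k. mset (ws k)) ` {..<n})" "mset (ws k) \<in> (\<lambda>k. mset (ws k)) ` {..<n}"
      "finite Occ" "occs (ws k) \<subseteq> Occ" "occs (ws l) \<subseteq> Occ"
      using that by (auto simp: Occ_def)
  qed (fact Occ_L herm norm)+
  have "(\<Sum>k<n. \<Sum>l<n. c k * cnj (c l) * qfin q (ws l) (ws k))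
      = (\<Sum>k<n. \<Sum>l<n. \<Sum>z\<in>Z. c k * vec (ws k) z * cnj (c l * vec (ws l) z))"
    by (simp add: gram sum_distrib_left mult_ac)
  also have "\<dots> = (\<Sum>z\<in>Z. \<Sum>k<n. \<Sum>l<n. c k * vec (ws k) z * cnj (c l * vec (ws l) z))"
    by (subst sum.swap, subst (2) sum.swap) (rule refl)
  also have "\<dots> = (\<Sum>z\<in>Z. (\<Sum>k<n. c k * vec (ws k) z) * cnj (\<Sum>l<n. c l * vec (ws l) z))"
    by (simp only: cnj_sum sum_product)
  also have "0 \<le> \<dots>"
    by (intro sum_nonneg, unfold complex_mult_cnj) (simp add: less_eq_complex_def)
  finally show ?thesis .
qed

lemma length_prefix [simp]: "length (prefix g m) = m"
  by (simp add: prefix_def)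

lemma prefix_Suc: "prefix g (Suc m) = prefix g m @ [g m]"
  by (simp add: prefix_def)

lemma prefix_append: "m \<le> m' \<Longrightarrow> prefix g m' = prefix g m @ map g [m..<m']"
  using upt_add_eq_append[of 0 m "m' - m"] by (simp add: prefix_def)

lemma set_prefix: "set (prefix g m) \<subseteq> range g"
  by (auto simp: prefix_def)

lemma inversions_prefix_mono:
  assumes "m \<le> m'" "mset (prefix g m) = mset (prefix b m)"
  shows "inversions (prefix g m) (prefix b m) \<subseteq> inversions (prefix g m') (prefix b m')"
proof
  fix p assume p: "p \<in> inversions (prefix g m) (prefix b m)"
  obtain x y where p_xy: "p = (x, y)" by (cases p)
  have "occs (prefix b m) = occs (prefix g m)" using assms(2) by (simp add: occs_eq_iff_mset)
  then have occ: "x \<in> occs (prefix g m)" "y \<in> occs (prefix g m)"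
    "x \<in> occs (prefix b m)" "y \<in> occs (prefix b m)"
    using p by (auto simp: p_xy inversions_def)
  have "x \<in> occs (prefix g m')" "y \<in> occs (prefix g m')"
    using occ(1,2) occs_append by (auto simp: prefix_append[OF assms(1), of g])
  moreover have "occ_pos (prefix g m') x = occ_pos (prefix g m) x" "occ_pos (prefix g m') y = occ_pos (prefix g m) y"
    "occ_pos (prefix b m') x = occ_pos (prefix b m) x" "occ_pos (prefix b m') y = occ_pos (prefix b m) y"
    using occ by (simp_all add: prefix_append[OF assms(1)] occ_pos_append)
  ultimately show "p \<in> inversions (prefix g m') (prefix b m')"
    using p by (simp add: p_xy inversions_def)
qed

lemma inversion_beyond_prefix:
  assumes "m \<le> m'" "mset (prefix g m) \<noteq> mset (prefix b m)" "mset (prefix g m') = mset (prefix b m')"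
  shows "\<exists>p\<in>inversions (prefix g m') (prefix b m'). m \<le> occ_pos (prefix g m') (snd p)"
proof -
  define u where "u = prefix g m"
  define v where "v = prefix b m"
  have g_m': "prefix g m' = u @ map g [m..<m']" and b_m': "prefix b m' = v @ map b [m..<m']"
    unfolding u_def v_def by (simp_all add: prefix_append[OF assms(1)])
  have "occs u \<noteq> occs v" using assms(2) by (simp add: u_def v_def occs_eq_iff_mset)
  moreover have "card (occs u) = card (occs v)" by (simp add: u_def v_def card_occs)
  ultimately have "\<not> occs v \<subseteq> occs u" "\<not> occs u \<subseteq> occs v"
    by (metis card_subset_eq finite_occs)+
  then obtain x y where x: "x \<in> occs u" "x \<notin> occs v" and y: "y \<in> occs v" "y \<notin> occs u"
    by blast
  have "fst x \<noteq> fst y"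
  proof
    assume "fst x = fst y"
    then show False using x y by (cases x, cases y) (auto simp: occs_def)
  qed
  moreover have "occs (prefix b m') = occs (prefix g m')" using assms(3) by (simp add: occs_eq_iff_mset)
  moreover have "occ_pos (prefix g m') x < m" "m \<le> occ_pos (prefix g m') y"
    "occ_pos (prefix b m') y < m" "m \<le> occ_pos (prefix b m') x"
    using occ_pos_append[OF x(1)] occ_pos_less[OF x(1)] occ_pos_append_ge[OF y(2)]
      occ_pos_append[OF y(1)] occ_pos_less[OF y(1)] occ_pos_append_ge[OF x(2)]
    by (simp_all add: g_m' b_m' u_def v_def)
  ultimately have "(x, y) \<in> inversions (prefix g m') (prefix b m')"
    using x(1) y(1) occs_append unfolding inversions_def g_m' b_m' by auto
  then show ?thesis using \<open>m \<le> occ_pos (prefix g m') y\<close> by force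
qed

lemma tails_agree_if_inversions_bounded:
  assumes bounded: "\<And>m. mset (prefix g m) = mset (prefix b m) \<Longrightarrow>
                       card (inversions (prefix g m) (prefix b m)) \<le> K"
    and frequent: "\<And>N. \<exists>m\<ge>N. mset (prefix g m) = mset (prefix b m)"
  shows "\<exists>m0. \<forall>n\<ge>m0. g n = b n"
proof -
  define A where "A m \<longleftrightarrow> mset (prefix g m) = mset (prefix b m)" for m
  define S where "S m = inversions (prefix g m) (prefix b m)" for m
  \<comment> \<open>Past a permutation pair with the most inversions no new inversion can appear.\<close>
  define C where "C = (\<lambda>m. card (S m)) ` Collect A"
  have "C \<subseteq> {..K}" using bounded by (auto simp: C_def A_def S_def)
  then have fin: "finite C" by (rule finite_subset) simp
  moreover have "C \<noteq> {}" using frequent[of 0] by (auto simp: C_def A_def)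
  ultimately have "Max C \<in> C" by (rule Max_in)
  then obtain m0 where A_m0: "A m0" and m0: "card (S m0) = Max C" by (auto simp: C_def)
  have max_m0: "card (S m) \<le> card (S m0)" if "A m" for m
    using Max_ge[OF fin, of "card (S m)"] that m0 by (simp add: C_def)
  have S_const: "S m = S m0" if "A m" "m0 \<le> m" for m
  proof -
    have "S m0 \<subseteq> S m"
      unfolding S_def using inversions_prefix_mono[OF that(2)] A_m0 by (simp add: A_def)
    moreover have "finite (S m)" by (simp add: S_def)
    ultimately show ?thesis
      using max_m0[OF that(1)] card_mono card_subset_eq by (metis order_antisym)
  qed
  have A_from_m0: "A m" if "m0 \<le> m" for m
  proof (rule ccontr)
    assume "\<not> A m"
    obtain m' where m': "Suc m \<le> m'" "A m'" using frequent[of "Suc m"] by (auto simp: A_def)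
    then obtain p where p: "p \<in> S m'" and late: "m \<le> occ_pos (prefix g m') (snd p)"
      using inversion_beyond_prefix[of m m' g b] \<open>\<not> A m\<close> by (auto simp: A_def S_def)
    have "p \<in> S m0" using p S_const[OF m'(2)] m'(1) that by simp
    then have early: "snd p \<in> occs (prefix g m0)" by (auto simp: S_def inversions_def)
    have "occ_pos (prefix g m') (snd p) = occ_pos (prefix g m0) (snd p)"
      using m'(1) that prefix_append[of m0 m' g] occ_pos_append[OF early] by simp
    also have "\<dots> < m0" using occ_pos_less[OF early] by simp
    finally show False using late that by simp
  qed
  have "g n = b n" if "m0 \<le> n" for n
    using A_from_m0[of n] A_from_m0[of "Suc n"] that by (simp add: A_def prefix_Suc)
  then show ?thesis by blast
qed

lemma card_inversions_less_if_norm_qfin_gt: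
  assumes r: "0 \<le> r" "r \<le> 1" and q_le: "\<And>i j. i \<in> set u \<Longrightarrow> j \<in> set u \<Longrightarrow> i \<noteq> j \<Longrightarrow> cmod (q i j) \<le> r"
    and large: "r ^ K < cmod (qfin q u v)"
  shows "mset u = mset v \<and> card (inversions u v) < K"
proof
  show "mset u = mset v"
    using large r(1) by (auto simp: qfin_eq_prod_inversions split: if_splits)
  show "card (inversions u v) < K"
  proof (rule ccontr)
    assume "\<not> card (inversions u v) < K"
    then have "r ^ card (inversions u v) \<le> r ^ K"
      using r by (intro power_decreasing) auto
    moreover have "cmod (qfin q u v) \<le> r ^ card (inversions u v)"
      using q_le r(1) by (rule norm_qfin_le)
    ultimately show False using large by simp
  qed
qed

lemma tails_agree_or_qfin_prefix_tendsto_0: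
  assumes r: "0 \<le> r" "r < 1" and q_le: "\<And>i j. i \<in> L \<Longrightarrow> j \<in> L \<Longrightarrow> i \<noteq> j \<Longrightarrow> cmod (q i j) \<le> r"
    and letters: "range g \<subseteq> L"
  shows "(\<exists>m0. \<forall>n\<ge>m0. g n = b n) \<or> (\<lambda>m. qfin q (prefix g m) (prefix b m)) \<longlonglongrightarrow> 0"
proof (rule disjCI)
  assume "\<not> (\<lambda>m. qfin q (prefix g m) (prefix b m)) \<longlonglongrightarrow> 0"
  then obtain e where e: "e > 0" and large: "\<And>N. \<exists>m\<ge>N. e \<le> cmod (qfin q (prefix g m) (prefix b m))"
    unfolding LIMSEQ_iff by (auto simp: not_less)
  obtain K where K: "r ^ K < e" using real_arch_pow_inv[OF e r(2)] by auto
  have good: "mset (prefix g m) = mset (prefix b m) \<and> card (inversions (prefix g m) (prefix b m)) < K"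
    if "e \<le> cmod (qfin q (prefix g m) (prefix b m))" for m
  proof (rule card_inversions_less_if_norm_qfin_gt)
    show "cmod (q i j) \<le> r" if "i \<in> set (prefix g m)" "j \<in> set (prefix g m)" "i \<noteq> j" for i j
      using that set_prefix[of g m] letters by (intro q_le) auto
  qed (use r K that in auto)
  show "\<exists>m0. \<forall>n\<ge>m0. g n = b n"
  proof (rule tails_agree_if_inversions_bounded)
    fix m assume perm: "mset (prefix g m) = mset (prefix b m)"
    obtain m' where m': "m \<le> m'" "e \<le> cmod (qfin q (prefix g m') (prefix b m'))" using large by blast
    have "card (inversions (prefix g m) (prefix b m)) \<le> card (inversions (prefix g m') (prefix b m'))"
      by (intro card_mono inversions_prefix_mono[OF m'(1) perm]) simp
    then show "card (inversions (prefix g m) (prefix b m)) \<le> K"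
      using good[OF m'(2)] by simp
  next
    show "\<exists>m\<ge>N. mset (prefix g m) = mset (prefix b m)" for N
      using large good by blast
  qed
qed

lemma qfin_prefix_eq_if_tails_agree:
  assumes "\<forall>n\<ge>m. g n = b n" "m \<le> M"
  shows "qfin q (prefix g M) (prefix b M) = qfin q (prefix g m) (prefix b m)"
proof -
  have tail: "map g [m..<M] = map b [m..<M]" using assms(1) by simp
  show ?thesis
    unfolding prefix_append[OF assms(2), of g] prefix_append[OF assms(2), of b] tail
    by (rule qfin_append)
qed

lemma uniform_norm_bound_lt_1:
  assumes "finite L" "\<And>i j. i \<in> L \<Longrightarrow> j \<in> L \<Longrightarrow> i \<noteq> j \<Longrightarrow> cmod (q i j) < 1"
  obtains r where "0 \<le> r" "r < 1" "\<And>i j. i \<in> L \<Longrightarrow> j \<in> L \<Longrightarrow> i \<noteq> j \<Longrightarrow> cmod (q i j) \<le> r"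
proof
  define R where "R = insert 0 ((\<lambda>(i, j). cmod (q i j)) ` {(i, j) \<in> L \<times> L. i \<noteq> j})"
  have "finite R" using assms(1) by (auto simp: R_def intro: finite_subset[of _ "L \<times> L"])
  then show "0 \<le> Max R" "Max R < 1" "\<And>i j. i \<in> L \<Longrightarrow> j \<in> L \<Longrightarrow> i \<noteq> j \<Longrightarrow> cmod (q i j) \<le> Max R"
    using assms(2) by (auto simp: R_def Max_ge_iff)
qed

lemma complex_nonneg_limit:
  fixes X :: "nat \<Rightarrow> complex"
  assumes "X \<longlonglongrightarrow> z" "\<And>m. 0 \<le> X m"
  shows "0 \<le> z"
proof -
  have "z \<in> \<real>\<^sub>\<ge>\<^sub>0"
    by (rule closed_sequentially[OF closed_nonneg_Reals_complex _ assms(1)])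
       (use assms(2) in \<open>simp add: complex_nonneg_Reals_iff less_eq_complex_def\<close>)
  then show ?thesis by (simp add: complex_nonneg_Reals_iff less_eq_complex_def)
qed

lemma shift_eq_iff: "shift m b = shift m g \<longleftrightarrow> (\<forall>n\<ge>m. b n = g n)"
  unfolding shift_def fun_eq_iff by (metis add.commute le_add1 le_add_diff_inverse)

lemma qfin_prefix_tendsto_if_tails_agree:
  assumes "\<forall>n\<ge>m. g n = b n"
  shows "(\<lambda>M. qfin q (prefix g M) (prefix b M)) \<longlonglongrightarrow> qfin q (prefix g m) (prefix b m)"
proof (rule tendsto_eventually)
  show "\<forall>\<^sub>F M in sequentially. qfin q (prefix g M) (prefix b M) = qfin q (prefix g m) (prefix b m)"
    unfolding eventually_sequentially using qfin_prefix_eq_if_tails_agree[OF assms] by blast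
qed

lemma qinf_eq_qfin_if_tails_agree:
  "\<forall>n\<ge>m. g n = b n \<Longrightarrow> qinf q g b = qfin q (prefix g m) (prefix b m)"
  unfolding qinf_def by (intro limI qfin_prefix_tendsto_if_tails_agree)

locale strictly_bounded_q =
  fixes L :: "nat set" and q :: "nat \<Rightarrow> nat \<Rightarrow> complex"
  assumes finite_L: "finite L"
    and norm_less_1: "\<And>i j. i \<in> L \<Longrightarrow> j \<in> L \<Longrightarrow> i \<noteq> j \<Longrightarrow> cmod (q i j) < 1"
begin

lemma tails_agree_or_tendsto_0:
  assumes "range g \<subseteq> L"
  shows "(\<exists>m0. \<forall>n\<ge>m0. g n = b n) \<or> (\<lambda>m. qfin q (prefix g m) (prefix b m)) \<longlonglongrightarrow> 0"
proof -
  obtain r where "0 \<le> r" "r < 1" "\<And>i j. i \<in> L \<Longrightarrow> j \<in> L \<Longrightarrow> i \<noteq> j \<Longrightarrow> cmod (q i j) \<le> r"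
    using uniform_norm_bound_lt_1[OF finite_L] norm_less_1 by blast
  then show ?thesis using assms by (rule tails_agree_or_qfin_prefix_tendsto_0)
qed

lemma convergent_qfin_prefix:
  "range g \<subseteq> L \<Longrightarrow> convergent (\<lambda>m. qfin q (prefix g m) (prefix b m))"
  using tails_agree_or_tendsto_0 qfin_prefix_tendsto_if_tails_agree
  by (metis convergentI)

lemma qinf_eq_0:
  assumes "range g \<subseteq> L" "\<forall>m. shift m b \<noteq> shift m g"
  shows "qinf q g b = 0"
proof -
  have "\<not> (\<exists>m0. \<forall>n\<ge>m0. g n = b n)"
    using assms(2) by (metis shift_eq_iff)
  then have "(\<lambda>m. qfin q (prefix g m) (prefix b m)) \<longlonglongrightarrow> 0"
    using tails_agree_or_tendsto_0[OF assms(1)] by blast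
  then show ?thesis unfolding qinf_def by (rule limI)
qed

lemma qinf_cnj_commute:
  assumes "range g \<subseteq> L" "range b \<subseteq> L"
    and herm: "\<And>i j. i \<in> L \<Longrightarrow> j \<in> L \<Longrightarrow> i \<noteq> j \<Longrightarrow> q i j = cnj (q j i)"
  shows "qinf q g b = cnj (qinf q b g)"
proof -
  have "qfin q (prefix g m) (prefix b m) = cnj (qfin q (prefix b m) (prefix g m))" for m
    using assms(1) set_prefix[of g m] by (intro qfin_cnj_commute herm) auto
  then have "(\<lambda>m. qfin q (prefix g m) (prefix b m)) \<longlonglongrightarrow> cnj (qinf q b g)"
    using convergent_qfin_prefix[OF assms(2), of g]
    by (simp add: qinf_def tendsto_cnj convergent_LIMSEQ_iff)
  then show ?thesis unfolding qinf_def by (rule limI)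
qed

lemma qinf_gram_nonneg:
  fixes c :: "nat \<Rightarrow> complex" and B :: "nat \<Rightarrow> nat \<Rightarrow> nat"
  assumes letters: "\<And>k. k < n \<Longrightarrow> range (B k) \<subseteq> L"
    and herm: "\<And>i j. i \<in> L \<Longrightarrow> j \<in> L \<Longrightarrow> i \<noteq> j \<Longrightarrow> q i j = cnj (q j i)"
  shows "0 \<le> (\<Sum>k<n. \<Sum>l<n. c k * cnj (c l) * qinf q (B l) (B k))"
proof (rule complex_nonneg_limit)
  show "(\<lambda>m. \<Sum>k<n. \<Sum>l<n. c k * cnj (c l) * qfin q (prefix (B l) m) (prefix (B k) m))
          \<longlonglongrightarrow> (\<Sum>k<n. \<Sum>l<n. c k * cnj (c l) * qinf q (B l) (B k))"
  proof (intro tendsto_sum tendsto_mult_left)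
    fix k l assume "l \<in> {..<n}"
    then show "(\<lambda>m. qfin q (prefix (B l) m) (prefix (B k) m)) \<longlonglongrightarrow> qinf q (B l) (B k)"
      using convergent_qfin_prefix[OF letters] by (simp add: qinf_def convergent_LIMSEQ_iff)
  qed
  show "0 \<le> (\<Sum>k<n. \<Sum>l<n. c k * cnj (c l) * qfin q (prefix (B l) m) (prefix (B k) m))" for m
  proof (rule qfin_gram_nonneg[where L = L and ws = "\<lambda>k. prefix (B k) m", simplified])
    show "cmod (q i j) \<le> 1" if "i \<in> L" "j \<in> L" "i \<noteq> j" for i j
      using norm_less_1[OF that] by simp
    show "set (prefix (B k) m) \<subseteq> L" if "k < n" for k
      using set_prefix letters[OF that] by blast
  qed (rule herm)
qed

end

theorem mainTheorem1:
  fixes d :: nat and q :: "nat \<Rightarrow> nat \<Rightarrow> complex" and \<alpha> :: "nat \<Rightarrow> nat"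
  assumes "d \<ge> 2"
    and "\<And>i j. i \<in> {1..d} \<Longrightarrow> j \<in> {1..d} \<Longrightarrow> i \<noteq> j \<Longrightarrow> norm (q i j) < 1"
    and "\<And>i j. i \<in> {1..d} \<Longrightarrow> j \<in> {1..d} \<Longrightarrow> i \<noteq> j \<Longrightarrow> q i j = cnj (q j i)"
    and "\<alpha> \<in> infidx d"
  shows "(\<forall>\<beta>\<in>infidx d. \<forall>\<gamma>\<in>infidx d.
            convergent (\<lambda>m. qfin q (prefix \<gamma> m) (prefix \<beta> m)))
       \<and> (\<forall>\<beta>\<in>infidx d. \<forall>\<gamma>\<in>infidx d. midx_equiv \<beta> \<alpha> \<longrightarrow> midx_equiv \<gamma> \<alpha> \<longrightarrow>
            eform q \<beta> \<gamma> = cnj (eform q \<gamma> \<beta>))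
       \<and> (\<forall>(n::nat) (c::nat \<Rightarrow> complex) (B::nat \<Rightarrow> nat \<Rightarrow> nat).
            (\<forall>k<n. B k \<in> infidx d \<and> midx_equiv (B k) \<alpha>) \<longrightarrow>
            0 \<le> (\<Sum>k<n. \<Sum>l<n. c k * cnj (c l) * eform q (B k) (B l)))
       \<and> (\<forall>\<beta>\<in>infidx d. \<forall>\<gamma>\<in>infidx d. midx_equiv \<beta> \<alpha> \<longrightarrow> midx_equiv \<gamma> \<alpha> \<longrightarrow>
            ((\<forall>m. shift m \<beta> \<noteq> shift m \<gamma>) \<longrightarrow> eform q \<beta> \<gamma> = 0)
          \<and> (\<forall>m. shift m \<beta> = shift m \<gamma> \<longrightarrow>
               eform q \<beta> \<gamma> = qfin q (prefix \<gamma> m) (prefix \<beta> m)))"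
proof -
  interpret strictly_bounded_q "{1..d}" q
    using assms(2) by unfold_locales auto
  have letters: "range \<beta> \<subseteq> {1..d}" if "\<beta> \<in> infidx d" for \<beta>
    using that by (auto simp: infidx_def)
  show ?thesis
  proof (intro conjI ballI allI impI)
    fix \<beta> \<gamma> assume \<beta>: "\<beta> \<in> infidx d" and \<gamma>: "\<gamma> \<in> infidx d"
    show "convergent (\<lambda>m. qfin q (prefix \<gamma> m) (prefix \<beta> m))"
      using letters[OF \<gamma>] by (rule convergent_qfin_prefix)
    show "eform q \<beta> \<gamma> = cnj (eform q \<gamma> \<beta>)"
      unfolding eform_def using letters[OF \<gamma>] letters[OF \<beta>] assms(3) by (rule qinf_cnj_commute)
    show "eform q \<beta> \<gamma> = 0" if "\<forall>m. shift m \<beta> \<noteq> shift m \<gamma>"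
      unfolding eform_def using letters[OF \<gamma>] that by (rule qinf_eq_0)
    show "eform q \<beta> \<gamma> = qfin q (prefix \<gamma> m) (prefix \<beta> m)" if "shift m \<beta> = shift m \<gamma>" for m
      unfolding eform_def using that by (metis qinf_eq_qfin_if_tails_agree shift_eq_iff)
  next
    fix n :: nat and c :: "nat \<Rightarrow> complex" and B :: "nat \<Rightarrow> nat \<Rightarrow> nat"
    assume B: "\<forall>k<n. B k \<in> infidx d \<and> midx_equiv (B k) \<alpha>"
    show "0 \<le> (\<Sum>k<n. \<Sum>l<n. c k * cnj (c l) * eform q (B k) (B l))"
      unfolding eform_def
    proof (rule qinf_gram_nonneg)
      show "range (B k) \<subseteq> {1..d}" if "k < n" for k
        using B letters that by blast
    qed (fact assms(3))
  qed
qed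

end
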